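(* Let $G_L=\langle(12),(23),(34),(67),A\rangle$ and $M_L=\langle(12),(23),(34),(56),(67),A\rangle$ in $GL(7,\mathbb{C})$, as in the context, so that $G_L$ has $12$ right cosets in $M_L$. Let $w_0$ be the unique non-identity element of the center of $M_L$. Consider the action of $M_L$ on the $220$ three-element subsets of the right coset space $G_L\backslash M_L$ given by $\{i,j,k\}\cdot\mu=\{i\mu,j\mu,k\mu\}$, where $(G_L\nu)\mu=G_L(\nu\mu)$. Call a subset $S\subseteq G_L\backslash M_L$ $L$-coherent if no two elements of $S$ are interchanged by the action of $w_0$, and $L$-incoherent otherwise. Then this action has exactly two orbits: one of length $160$, consisting of all $L$-coherent triples, and one of length $60$, consisting of all $L$-incoherent triples.
   Context: A permutation $\sigma\in S_7$ is identified with the $7\times7$ permutation matrix sending $e_i$ to $e_{\sigma(i)}$. The matrix $A$ is \[ A=\begin{pmatrix} 1&0&0&0&0&0&0\\ 0&1&0&0&0&0&0\\ 0&0&-1&0&0&0&1\\ 0&0&0&-1&0&0&1\\ 0&0&-1&-1&1&0&1\\ 0&0&-1&-1&0&1&1\\ 0&0&0&0&0&0&1 \end{pmatrix}. \] $M_L$ is isomorphic to the Coxeter group $W(D_6)$ (order 23040), whose center has order two, and $G_L\cong W(D_5)$ has order 1920. *)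

theory Defs
  imports "Jordan_Normal_Form.Matrix" "HOL-Algebra.Generated_Groups" "HOL-Algebra.Coset"
    "HOL-Combinatorics.Transposition"
begin

definition GL7 :: "complex mat monoid" where
  "GL7 = units_of (ring_mat TYPE(complex) 7 ())"

text \<open>Permutation matrix of a permutation sigma of {1..7}, sending e_i to e_(sigma i).
  Matrix indices are 0-based, so row/column k corresponds to basis vector e_(k+1).\<close>
definition perm_mat7 :: "(nat \<Rightarrow> nat) \<Rightarrow> complex mat" where
  "perm_mat7 \<sigma> = mat 7 7 (\<lambda>(i, j). if i + 1 = \<sigma> (j + 1) then 1 else 0)"

definition tr7 :: "nat \<Rightarrow> nat \<Rightarrow> complex mat" where
  "tr7 a b = perm_mat7 (Transposition.transpose a b)"

definition A_L :: "complex mat" where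
  "A_L = mat_of_rows_list 7
    [[1, 0, 0, 0, 0, 0, 0],
     [0, 1, 0, 0, 0, 0, 0],
     [0, 0, -1, 0, 0, 0, 1],
     [0, 0, 0, -1, 0, 0, 1],
     [0, 0, -1, -1, 1, 0, 1],
     [0, 0, -1, -1, 0, 1, 1],
     [0, 0, 0, 0, 0, 0, 1]]"

definition G_L :: "complex mat set" where
  "G_L = generate GL7 {tr7 1 2, tr7 2 3, tr7 3 4, tr7 6 7, A_L}"

definition M_L :: "complex mat set" where
  "M_L = generate GL7 {tr7 1 2, tr7 2 3, tr7 3 4, tr7 5 6, tr7 6 7, A_L}"

definition w0 :: "complex mat" where
  "w0 = (THE w. w \<in> M_L \<and> w \<noteq> \<one>\<^bsub>GL7\<^esub> \<and>
                 (\<forall>m \<in> M_L. w \<otimes>\<^bsub>GL7\<^esub> m = m \<otimes>\<^bsub>GL7\<^esub> w))"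

definition cosets_L :: "complex mat set set" where
  "cosets_L = {G_L #>\<^bsub>GL7\<^esub> \<nu> | \<nu>. \<nu> \<in> M_L}"

definition cact :: "complex mat set \<Rightarrow> complex mat \<Rightarrow> complex mat set" where
  "cact C \<mu> = C #>\<^bsub>GL7\<^esub> \<mu>"

definition sact :: "complex mat set set \<Rightarrow> complex mat \<Rightarrow> complex mat set set" where
  "sact S \<mu> = (\<lambda>C. cact C \<mu>) ` S"

definition triples_L :: "complex mat set set set" where
  "triples_L = {S. S \<subseteq> cosets_L \<and> card S = 3}"

definition orbit_L :: "complex mat set set \<Rightarrow> complex mat set set set" where
  "orbit_L S = {sact S \<mu> | \<mu>. \<mu> \<in> M_L}"

definition L_coherent :: "complex mat set set \<Rightarrow> bool" where
  "L_coherent S \<longleftrightarrow>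
     \<not> (\<exists>i \<in> S. \<exists>j \<in> S. i \<noteq> j \<and> cact i w0 = j \<and> cact j w0 = i)"

end

theory Submission
  imports Defs
begin

text \<open>The right cosets of G_L in M_L are the cosets G_L r_i of twelve explicit words r_i in the
  generators. The row vector v = (0, 0, 0, 0, 1, -1, -1) is fixed by G_L and the twelve vectors v r_i
  are distinct, so these cosets are distinct; certificate words h in the generators of G_L with
  r_i g = h r_j show that every generator g permutes them, so they exhaust M_L. Seven of the vectors
  v r_i are linearly independent, hence M_L acts faithfully on the cosets. A central element w is
  therefore determined by the coset G_L w, and commuting with the generators leaves only w = 1 and
  one explicit word, which acts on the cosets by i \<mapsto> 11 - i. As w0 is central, L-coherence is
  invariant under M_L. Spanning trees of the orbits of {0, 1, 2} and {0, 1, 11} exhibit 160 coherent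
  and 60 incoherent triples, and 160 + 60 = 220 is the number of all triples.\<close>

definition lmat_dims :: "nat \<Rightarrow> nat \<Rightarrow> int list list \<Rightarrow> bool" where
  "lmat_dims n k a \<longleftrightarrow> length a = n \<and> (\<forall>r \<in> set a. length r = k)"

definition lmat :: "nat \<Rightarrow> nat \<Rightarrow> int list list \<Rightarrow> 'a::ring_1 mat" where
  "lmat n k a = mat n k (\<lambda>(i, j). of_int (a ! i ! j))"

definition lmat_mult :: "int list list \<Rightarrow> int list list \<Rightarrow> int list list" where
  "lmat_mult a b =
     map (\<lambda>r. map (\<lambda>j. sum_list (map2 (*) r (map (\<lambda>s. s ! j) b))) [0..<length (hd b)]) a"

definition lmat_one :: "nat \<Rightarrow> int list list" where
  "lmat_one n = map (\<lambda>i. map (\<lambda>j. if i = j then 1 else 0) [0..<n]) [0..<n]"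

lemma lmat_carrier [simp]: "lmat n k a \<in> carrier_mat n k"
  by (simp add: lmat_def)

lemma sum_list_map2_times:
  "length xs = n \<Longrightarrow> length ys = n \<Longrightarrow> sum_list (map2 (*) xs ys) = (\<Sum>i<n. xs ! i * ys ! i)"
  by (simp add: sum_list_sum_nth atLeast0LessThan)

lemma lmat_mult_dims:
  "lmat_dims n k a \<Longrightarrow> lmat_dims k l b \<Longrightarrow> 0 < k \<Longrightarrow> lmat_dims n l (lmat_mult a b)"
  by (cases b) (auto simp: lmat_dims_def lmat_mult_def)

lemma lmat_mult_nth:
  assumes "lmat_dims n k a" "lmat_dims k l b" "0 < k" "i < n" "j < l"
  shows "lmat_mult a b ! i ! j = (\<Sum>m<k. a ! i ! m * b ! m ! j)"
proof -
  have "length (hd b) = l" "length (a ! i) = k"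
    using assms by (cases b; auto simp: lmat_dims_def)+
  then show ?thesis
    using assms by (simp add: lmat_mult_def sum_list_map2_times[where n = k] lmat_dims_def)
qed

lemma lmat_mult:
  assumes "lmat_dims n k a" "lmat_dims k l b" "0 < k"
  shows "lmat n l (lmat_mult a b) = (lmat n k a * lmat k l b :: 'a::ring_1 mat)"
  by (rule eq_matI)
     (use assms in \<open>auto simp: lmat_def lmat_mult_nth scalar_prod_def atLeast0LessThan
       of_int_sum of_int_mult intro!: sum.cong\<close>)

lemma lmat_one_dims: "lmat_dims n n (lmat_one n)"
  by (simp add: lmat_dims_def lmat_one_def)

lemma lmat_one: "lmat n n (lmat_one n) = 1\<^sub>m n"
  by (rule eq_matI) (auto simp: lmat_def lmat_one_def)

lemma lmat_inj:
  assumes "lmat_dims n k a" "lmat_dims n k b" "(lmat n k a :: 'a::ring_char_0 mat) = lmat n k b"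
  shows "a = b"
proof (rule nth_equalityI)
  show "length a = length b" using assms by (simp add: lmat_dims_def)
  fix i assume "i < length a"
  then have i: "i < n" using assms by (simp add: lmat_dims_def)
  show "a ! i = b ! i"
  proof (rule nth_equalityI)
    show "length (a ! i) = length (b ! i)" using assms i by (simp add: lmat_dims_def)
    fix j assume "j < length (a ! i)"
    then have "j < k" using assms i by (simp add: lmat_dims_def)
    then have "(lmat n k a :: 'a mat) $$ (i, j) = lmat n k b $$ (i, j)" using assms by simp
    then show "a ! i ! j = b ! i ! j" using i \<open>j < k\<close> by (simp add: lmat_def)
  qed
qed

lemma lmat_mult_row:
  assumes "i < n" "x \<in> carrier_mat k l" "j < l"
  shows "(lmat n k a * x) $$ (i, j) = (lmat 1 k [a ! i] * x) $$ (0, j)"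
  using assms by (simp add: lmat_def scalar_prod_def)

lemma GL7_mult [simp]: "x \<otimes>\<^bsub>GL7\<^esub> y = x * y"
  by (simp add: GL7_def units_of_mult ring_mat_simps)

lemma GL7_one [simp]: "\<one>\<^bsub>GL7\<^esub> = 1\<^sub>m 7"
  by (simp add: GL7_def units_of_one ring_mat_simps)

lemma group_GL7: "group GL7"
proof -
  interpret ring "ring_mat TYPE(complex) 7 ()" by (rule ring_mat)
  show ?thesis unfolding GL7_def by (rule units_group)
qed

lemma GL7_carrier_mat: "x \<in> carrier GL7 \<Longrightarrow> x \<in> carrier_mat 7 7"
  by (simp add: GL7_def units_of_carrier Units_def ring_mat_simps)

lemma involution_GL7:
  assumes "x \<in> carrier_mat 7 7" "x * x = 1\<^sub>m 7"
  shows "x \<in> carrier GL7" "inv\<^bsub>GL7\<^esub> x = x"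
proof -
  show x: "x \<in> carrier GL7"
    using assms by (auto simp: GL7_def units_of_carrier Units_def ring_mat_simps)
  show "inv\<^bsub>GL7\<^esub> x = x"
    using group.inv_equality[OF group_GL7 _ x x] assms by simp
qed

lemma GL7_rcos_rcos:
  "H \<subseteq> carrier GL7 \<Longrightarrow> x \<in> carrier GL7 \<Longrightarrow> y \<in> carrier GL7 \<Longrightarrow>
     (H #>\<^bsub>GL7\<^esub> x) #>\<^bsub>GL7\<^esub> y = H #>\<^bsub>GL7\<^esub> (x * y)"
  using group.coset_mult_assoc[OF group_GL7] by simp

lemma (in group) generate_right_induct [consumes 2, case_names one step]:
  assumes "S \<subseteq> carrier G" "x \<in> generate G S" "P \<one>"
    and "\<And>y s. y \<in> carrier G \<Longrightarrow> P y \<Longrightarrow> s \<in> S \<Longrightarrow> P (y \<otimes> s) \<and> P (y \<otimes> inv s)"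
  shows "P x"
proof -
  have "\<forall>y \<in> carrier G. P y \<longrightarrow> P (y \<otimes> x)"
    using assms(2)
  proof (induction x rule: generate.induct)
    case (eng h1 h2)
    have h: "h1 \<in> carrier G" "h2 \<in> carrier G"
      using eng.hyps generate_in_carrier[OF assms(1)] by auto
    show ?case
    proof (intro ballI impI)
      fix y assume y: "y \<in> carrier G" "P y"
      then have "P (y \<otimes> h1 \<otimes> h2)" using eng.IH \<open>h1 \<in> carrier G\<close> by simp
      then show "P (y \<otimes> (h1 \<otimes> h2))" using y h by (simp add: m_assoc)
    qed
  qed (use assms(4) in auto)
  moreover have "x \<in> carrier G" using generate_in_carrier[OF assms(1,2)] .
  ultimately show ?thesis using assms(3) by (metis l_one one_closed)
qed

definition gen_lists :: "int list list list" where
  "gen_lists = [[[0,1,0,0,0,0,0],[1,0,0,0,0,0,0],[0,0,1,0,0,0,0],[0,0,0,1,0,0,0],[0,0,0,0,1,0,0],[0,0,0,0,0,1,0],[0,0,0,0,0,0,1]],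
    [[1,0,0,0,0,0,0],[0,0,1,0,0,0,0],[0,1,0,0,0,0,0],[0,0,0,1,0,0,0],[0,0,0,0,1,0,0],[0,0,0,0,0,1,0],[0,0,0,0,0,0,1]],
    [[1,0,0,0,0,0,0],[0,1,0,0,0,0,0],[0,0,0,1,0,0,0],[0,0,1,0,0,0,0],[0,0,0,0,1,0,0],[0,0,0,0,0,1,0],[0,0,0,0,0,0,1]],
    [[1,0,0,0,0,0,0],[0,1,0,0,0,0,0],[0,0,1,0,0,0,0],[0,0,0,1,0,0,0],[0,0,0,0,0,1,0],[0,0,0,0,1,0,0],[0,0,0,0,0,0,1]],
    [[1,0,0,0,0,0,0],[0,1,0,0,0,0,0],[0,0,1,0,0,0,0],[0,0,0,1,0,0,0],[0,0,0,0,1,0,0],[0,0,0,0,0,0,1],[0,0,0,0,0,1,0]],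
    [[1,0,0,0,0,0,0],[0,1,0,0,0,0,0],[0,0,-1,0,0,0,1],[0,0,0,-1,0,0,1],[0,0,-1,-1,1,0,1],[0,0,-1,-1,0,1,1],[0,0,0,0,0,0,1]]]"

definition gen :: "nat \<Rightarrow> complex mat" where
  "gen a = lmat 7 7 (gen_lists ! a)"

lemma gen_lists_dims: "a < 6 \<Longrightarrow> lmat_dims 7 7 (gen_lists ! a)"
  by (auto simp: lmat_dims_def gen_lists_def less_Suc_eq numeral_eq_Suc)

lemma gen_lists_involution:
  "list_all (\<lambda>a. lmat_mult (gen_lists ! a) (gen_lists ! a) = lmat_one 7) [0..<6]"
  by code_simp

lemma gen_GL7:
  assumes "a < 6"
  shows "gen a \<in> carrier GL7" "inv\<^bsub>GL7\<^esub> (gen a) = gen a"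
proof -
  have "gen a * gen a = lmat 7 7 (lmat_mult (gen_lists ! a) (gen_lists ! a))"
    using lmat_mult[OF gen_lists_dims gen_lists_dims, of a a, symmetric] assms by (simp add: gen_def)
  also have "\<dots> = 1\<^sub>m 7"
    using gen_lists_involution assms by (simp add: list_all_iff lmat_one)
  finally have "gen a * gen a = 1\<^sub>m 7" .
  then show "gen a \<in> carrier GL7" "inv\<^bsub>GL7\<^esub> (gen a) = gen a"
    using involution_GL7 by (simp_all add: gen_def)
qed

lemma tr7_gen: "tr7 1 2 = gen 0" "tr7 2 3 = gen 1" "tr7 3 4 = gen 2" "tr7 5 6 = gen 3" "tr7 6 7 = gen 4"
  by (rule eq_matI; auto simp: tr7_def perm_mat7_def gen_def lmat_def gen_lists_def
      Transposition.transpose_def less_Suc_eq numeral_eq_Suc)+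

lemma A_L_gen: "A_L = gen 5"
  by (rule eq_matI)
     (auto simp: A_L_def mat_of_rows_list_def gen_def lmat_def gen_lists_def less_Suc_eq numeral_eq_Suc)

lemma G_L_generators: "G_L = generate GL7 (gen ` {0, 1, 2, 4, 5})"
  unfolding G_L_def tr7_gen A_L_gen by simp

lemma M_L_generators: "M_L = generate GL7 (gen ` {..<6})"
proof -
  have "{..<6::nat} = {0, 1, 2, 3, 4, 5}" by auto
  then show ?thesis unfolding M_L_def tr7_gen A_L_gen by (simp add: insert_commute)
qed

lemma gen_M_L: "a < 6 \<Longrightarrow> gen a \<in> M_L"
  unfolding M_L_generators by (auto intro: generate.incl)

lemma gen_set_GL7: "A \<subseteq> {..<6} \<Longrightarrow> gen ` A \<subseteq> carrier GL7"
  using gen_GL7 by blast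

lemma subgroup_G_L: "subgroup G_L GL7"
  unfolding G_L_generators by (rule group.generate_is_subgroup[OF group_GL7 gen_set_GL7]) auto

lemma subgroup_M_L: "subgroup M_L GL7"
  unfolding M_L_generators by (rule group.generate_is_subgroup[OF group_GL7 gen_set_GL7]) auto

lemma G_L_GL7: "G_L \<subseteq> carrier GL7"
  using subgroup_G_L subgroup.subset by blast

lemma M_L_GL7: "M_L \<subseteq> carrier GL7"
  using subgroup_M_L subgroup.subset by blast

lemma generate_right_induct_gen [consumes 1, case_names gens one step]:
  assumes "x \<in> generate GL7 (gen ` A)" "A \<subseteq> {..<6}" "P (1\<^sub>m 7)"
    and "\<And>y a. y \<in> carrier GL7 \<Longrightarrow> P y \<Longrightarrow> a \<in> A \<Longrightarrow> P (y * gen a)"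
  shows "P x"
  using group.generate_right_induct[OF group_GL7 gen_set_GL7[OF assms(2)] assms(1), of P]
    assms(3,4) gen_GL7 assms(2) by fastforce

definition word :: "nat list \<Rightarrow> complex mat" where
  "word ws = foldr (\<lambda>a m. gen a * m) ws (1\<^sub>m 7)"

fun word_lists :: "nat list \<Rightarrow> int list list" where
  "word_lists [] = lmat_one 7"
| "word_lists (a # ws) = lmat_mult (gen_lists ! a) (word_lists ws)"

lemma word_Nil [simp]: "word [] = 1\<^sub>m 7"
  and word_Cons [simp]: "word (a # ws) = gen a * word ws"
  by (simp_all add: word_def)

lemma gen_carrier [simp]: "gen a \<in> carrier_mat 7 7"
  by (simp add: gen_def)

lemma word_carrier [simp]: "word ws \<in> carrier_mat 7 7"
  by (induction ws) (auto intro!: mult_carrier_mat[of _ 7 7 _ 7])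

lemma word_lists:
  "set ws \<subseteq> {..<6} \<Longrightarrow> lmat_dims 7 7 (word_lists ws) \<and> word ws = lmat 7 7 (word_lists ws)"
proof (induction ws)
  case (Cons a ws)
  then have "a < 6" "lmat_dims 7 7 (word_lists ws)" "word ws = lmat 7 7 (word_lists ws)" by auto
  then show ?case
    using lmat_mult_dims[OF gen_lists_dims] lmat_mult[OF gen_lists_dims, symmetric]
    by (simp add: gen_def)
qed (simp add: lmat_one_dims lmat_one)

lemma word_in_generate: "set ws \<subseteq> A \<Longrightarrow> word ws \<in> generate GL7 (gen ` A)"
proof (induction ws)
  case Nil
  then show ?case using generate.one[of GL7] by simp
next
  case (Cons a ws)
  then have "gen a \<in> generate GL7 (gen ` A)" by (auto intro: generate.incl)
  then show ?case using generate.eng[OF _ Cons.IH] Cons.prems by simp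
qed

section \<open>The right cosets of G_L in M_L\<close>

definition transversal :: "nat list list" where
  "transversal = [[],
    [3],
    [3,4],
    [3,4,5],
    [3,4,5,1],
    [3,4,5,1,0],
    [3,4,5,1,2],
    [3,4,5,1,0,2],
    [3,4,5,1,0,2,1],
    [3,4,5,1,0,2,1,5],
    [3,4,5,1,0,2,1,5,4],
    [3,4,5,1,0,2,1,5,4,3]]"

definition rep :: "nat \<Rightarrow> complex mat" where
  "rep i = word (transversal ! i)"

definition coset :: "nat \<Rightarrow> complex mat set" where
  "coset i = G_L #>\<^bsub>GL7\<^esub> rep i"

text \<open>The matrices of the transversal words, precomputed to keep the certificate checks fast.\<close>

definition rep_lists :: "int list list list" where
  "rep_lists = [[[1,0,0,0,0,0,0],[0,1,0,0,0,0,0],[0,0,1,0,0,0,0],[0,0,0,1,0,0,0],[0,0,0,0,1,0,0],[0,0,0,0,0,1,0],[0,0,0,0,0,0,1]],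
    [[1,0,0,0,0,0,0],[0,1,0,0,0,0,0],[0,0,1,0,0,0,0],[0,0,0,1,0,0,0],[0,0,0,0,0,1,0],[0,0,0,0,1,0,0],[0,0,0,0,0,0,1]],
    [[1,0,0,0,0,0,0],[0,1,0,0,0,0,0],[0,0,1,0,0,0,0],[0,0,0,1,0,0,0],[0,0,0,0,0,0,1],[0,0,0,0,1,0,0],[0,0,0,0,0,1,0]],
    [[1,0,0,0,0,0,0],[0,1,0,0,0,0,0],[0,0,-1,0,0,0,1],[0,0,0,-1,0,0,1],[0,0,0,0,0,0,1],[0,0,-1,-1,1,0,1],[0,0,-1,-1,0,1,1]],
    [[1,0,0,0,0,0,0],[0,0,1,0,0,0,0],[0,-1,0,0,0,0,1],[0,0,0,-1,0,0,1],[0,0,0,0,0,0,1],[0,-1,0,-1,1,0,1],[0,-1,0,-1,0,1,1]],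
    [[0,1,0,0,0,0,0],[0,0,1,0,0,0,0],[-1,0,0,0,0,0,1],[0,0,0,-1,0,0,1],[0,0,0,0,0,0,1],[-1,0,0,-1,1,0,1],[-1,0,0,-1,0,1,1]],
    [[1,0,0,0,0,0,0],[0,0,0,1,0,0,0],[0,-1,0,0,0,0,1],[0,0,-1,0,0,0,1],[0,0,0,0,0,0,1],[0,-1,-1,0,1,0,1],[0,-1,-1,0,0,1,1]],
    [[0,1,0,0,0,0,0],[0,0,0,1,0,0,0],[-1,0,0,0,0,0,1],[0,0,-1,0,0,0,1],[0,0,0,0,0,0,1],[-1,0,-1,0,1,0,1],[-1,0,-1,0,0,1,1]],
    [[0,0,1,0,0,0,0],[0,0,0,1,0,0,0],[-1,0,0,0,0,0,1],[0,-1,0,0,0,0,1],[0,0,0,0,0,0,1],[-1,-1,0,0,1,0,1],[-1,-1,0,0,0,1,1]],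
    [[0,0,-1,0,0,0,1],[0,0,0,-1,0,0,1],[-1,0,0,0,0,0,1],[0,-1,0,0,0,0,1],[0,0,0,0,0,0,1],[-1,-1,-1,-1,1,0,2],[-1,-1,-1,-1,0,1,2]],
    [[0,0,-1,0,0,1,0],[0,0,0,-1,0,1,0],[-1,0,0,0,0,1,0],[0,-1,0,0,0,1,0],[0,0,0,0,0,1,0],[-1,-1,-1,-1,1,2,0],[-1,-1,-1,-1,0,2,1]],
    [[0,0,-1,0,1,0,0],[0,0,0,-1,1,0,0],[-1,0,0,0,1,0,0],[0,-1,0,0,1,0,0],[0,0,0,0,1,0,0],[-1,-1,-1,-1,2,1,0],[-1,-1,-1,-1,2,0,1]]]"

lemma transversal_lists:
  "list_all (\<lambda>i. set (transversal ! i) \<subseteq> {..<6} \<and> word_lists (transversal ! i) = rep_lists ! i)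
     [0..<12]"
  by code_simp

lemma transversal_gens: "i < 12 \<Longrightarrow> set (transversal ! i) \<subseteq> {..<6}"
  using transversal_lists by (simp add: list_all_iff)

lemma rep_lists:
  "i < 12 \<Longrightarrow> lmat_dims 7 7 (rep_lists ! i) \<and> rep i = lmat 7 7 (rep_lists ! i)"
  using transversal_lists word_lists[OF transversal_gens] by (simp add: list_all_iff rep_def)

lemma rep_M_L: "i < 12 \<Longrightarrow> rep i \<in> M_L"
  unfolding rep_def M_L_generators using word_in_generate transversal_gens by blast

lemma rep_GL7: "i < 12 \<Longrightarrow> rep i \<in> carrier GL7"
  using rep_M_L M_L_GL7 by blast

lemma coset_GL7: "i < 12 \<Longrightarrow> coset i \<subseteq> carrier GL7"
  unfolding coset_def by (rule monoid.r_coset_subset_G[OF group.is_monoid[OF group_GL7] G_L_GL7 rep_GL7])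

lemma coset_zero: "coset 0 = G_L"
  using group.coset_mult_one[OF group_GL7 G_L_GL7]
  by (simp add: coset_def rep_def transversal_def)

text \<open>Right multiplication by elements of G_L fixes this row vector, so it separates right cosets.\<close>

definition fixed_vec :: "int list" where
  "fixed_vec = [0, 0, 0, 0, 1, -1, -1]"

abbreviation fixed_row :: "complex mat" where
  "fixed_row \<equiv> lmat 1 7 [fixed_vec]"

lemma fixed_vec_dims: "lmat_dims 1 7 [fixed_vec]"
  by (simp add: lmat_dims_def fixed_vec_def)

lemma fixed_vec_gens:
  "list_all (\<lambda>a. lmat_mult [fixed_vec] (gen_lists ! a) = [fixed_vec]) [0, 1, 2, 4, 5]"
  by code_simp

lemma fixed_row_G_L: "g \<in> G_L \<Longrightarrow> fixed_row * g = fixed_row"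
proof -
  assume "g \<in> G_L"
  then have "g \<in> carrier_mat 7 7 \<and> fixed_row * g = fixed_row"
    unfolding G_L_generators
  proof (induction rule: generate_right_induct_gen)
    case (step y a)
    then have a: "a < 6" "lmat_mult [fixed_vec] (gen_lists ! a) = [fixed_vec]"
      using fixed_vec_gens by auto
    have "fixed_row * (y * gen a) = (fixed_row * y) * gen a"
      using assoc_mult_mat[of fixed_row 1 7 y 7 "gen a" 7] step by simp
    also have "\<dots> = fixed_row"
      using step a lmat_mult[OF fixed_vec_dims gen_lists_dims, of a, symmetric] by (simp add: gen_def)
    finally show ?case using step by (auto intro!: mult_carrier_mat[OF _ gen_carrier])
  qed (auto simp: right_mult_one_mat[OF lmat_carrier])
  then show ?thesis by simp
qed

lemma fixed_row_rcos:
  assumes "x \<in> carrier GL7" "y \<in> carrier GL7" "G_L #>\<^bsub>GL7\<^esub> x = G_L #>\<^bsub>GL7\<^esub> y"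
  shows "fixed_row * x = fixed_row * y"
proof -
  obtain g where g: "g \<in> G_L" "y = g * x"
    using group.repr_independenceD[OF group_GL7 subgroup_G_L assms(2,3)] by (auto simp: r_coset_def)
  have "g \<in> carrier_mat 7 7" using g G_L_GL7 GL7_carrier_mat by blast
  then have "fixed_row * y = (fixed_row * g) * x"
    using g assoc_mult_mat[OF lmat_carrier _ GL7_carrier_mat[OF assms(1)]] by simp
  then show ?thesis
    using g fixed_row_G_L by simp
qed

definition coset_vec :: "nat \<Rightarrow> int list" where
  "coset_vec i = hd (lmat_mult [fixed_vec] (rep_lists ! i))"

lemma coset_vec:
  assumes "i < 12"
  shows "lmat_dims 1 7 [coset_vec i]" "fixed_row * rep i = lmat 1 7 [coset_vec i]"
proof -
  have "lmat_mult [fixed_vec] (rep_lists ! i) = [coset_vec i]"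
    by (simp add: lmat_mult_def coset_vec_def)
  then show "lmat_dims 1 7 [coset_vec i]" "fixed_row * rep i = lmat 1 7 [coset_vec i]"
    using lmat_mult_dims[OF fixed_vec_dims, of 7 "rep_lists ! i"]
      lmat_mult[OF fixed_vec_dims, of 7 "rep_lists ! i", symmetric] rep_lists[OF assms]
    by simp_all
qed

lemma distinct_coset_vecs: "distinct (map coset_vec [0..<12])"
  by code_simp

lemma coset_inj:
  assumes i: "i < 12" and j: "j < 12" and eq: "coset i = coset j"
  shows "i = j"
proof -
  have "lmat 1 7 [coset_vec i] = (lmat 1 7 [coset_vec j] :: complex mat)"
    using fixed_row_rcos[OF rep_GL7[OF i] rep_GL7[OF j]] eq coset_vec(2)[OF i] coset_vec(2)[OF j]
    by (simp add: coset_def)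
  then have "coset_vec i = coset_vec j"
    using lmat_inj[OF coset_vec(1)[OF i] coset_vec(1)[OF j]] by simp
  moreover have "inj_on coset_vec {0..<12}"
    using distinct_coset_vecs by (simp add: distinct_map)
  ultimately show ?thesis
    using inj_onD i j by fastforce
qed

text \<open>The generator gen a maps coset i to coset (gen_perm a i). The certificate word
  coset_gen_words ! i ! a uses only generators of G_L and satisfies
  rep i * gen a = word (coset_gen_words ! i ! a) * rep (gen_perm a i).\<close>

definition gen_perm_table :: "nat list list" where
  "gen_perm_table = [[0,1,2,3,5,4,7,6,8,9,10,11],
    [0,1,2,4,3,5,6,8,7,9,10,11],
    [0,1,2,3,6,7,4,5,8,9,10,11],
    [1,0,2,3,4,5,6,7,8,9,11,10],
    [0,2,1,3,4,5,6,7,8,10,9,11],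
    [0,1,3,2,6,7,4,5,9,8,10,11]]"

definition gen_perm :: "nat \<Rightarrow> nat \<Rightarrow> nat" where
  "gen_perm a i = gen_perm_table ! a ! i"

definition coset_gen_words :: "nat list list list" where
  "coset_gen_words = [[[0],[1],[2],[],[4],[5]],
    [[0],[1],[2],[],[],[5]],
    [[0],[1],[2],[4],[],[]],
    [[0],[],[2],[4],[2,5],[]],
    [[],[],[],[4],[2,5],[1,2,1]],
    [[],[0],[],[4],[2,5],[1,2,1]],
    [[],[2],[],[4],[2,5],[1,2,1]],
    [[],[],[],[4],[2,5],[1,2,1]],
    [[2],[],[0],[4],[2,5],[]],
    [[2],[0,1,2,1,0],[0],[4],[],[]],
    [[2],[0,1,2,1,0],[0],[],[],[0,2,5]],
    [[2],[0,1,2,1,0],[0],[],[4],[0,2,5]]]"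

lemma coset_gen_certificate:
  "list_all (\<lambda>i. list_all (\<lambda>a. gen_perm a i < 12 \<and> set (coset_gen_words ! i ! a) \<subseteq> {0, 1, 2, 4, 5} \<and>
      lmat_mult (rep_lists ! i) (gen_lists ! a) =
      lmat_mult (word_lists (coset_gen_words ! i ! a)) (rep_lists ! gen_perm a i)) [0..<6]) [0..<12]"
  by code_simp

lemma gen_perm_lt: "a < 6 \<Longrightarrow> i < 12 \<Longrightarrow> gen_perm a i < 12"
  using coset_gen_certificate by (simp add: list_all_iff)

lemma coset_mult_gen:
  assumes i: "i < 12" and a: "a < 6"
  shows "coset i #>\<^bsub>GL7\<^esub> gen a = coset (gen_perm a i)"
proof -
  define j h where "j = gen_perm a i" and "h = coset_gen_words ! i ! a"
  have j: "j < 12" and h: "set h \<subseteq> {0, 1, 2, 4, 5}"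
    and eq: "lmat_mult (rep_lists ! i) (gen_lists ! a) = lmat_mult (word_lists h) (rep_lists ! j)"
    using coset_gen_certificate i a by (simp_all add: list_all_iff j_def h_def)
  have hG: "word h \<in> G_L"
    unfolding G_L_generators using word_in_generate[OF h] .
  have "set h \<subseteq> {..<6}" using h by auto
  then have h_lists: "lmat_dims 7 7 (word_lists h)" "word h = lmat 7 7 (word_lists h)"
    using word_lists by simp_all
  have "rep i * gen a = lmat 7 7 (lmat_mult (rep_lists ! i) (gen_lists ! a))"
    using rep_lists[OF i]
      lmat_mult[OF conjunct1[OF rep_lists[OF i]] gen_lists_dims[OF a], where 'a = complex]
    by (simp add: gen_def)
  also have "\<dots> = word h * rep j"
    unfolding eq using rep_lists[OF j] lmat_mult[OF h_lists(1), where 'a = complex] h_lists(2) by simp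
  finally have "rep i * gen a = word h * rep j" .
  then have "coset i #>\<^bsub>GL7\<^esub> gen a = (G_L #>\<^bsub>GL7\<^esub> word h) #>\<^bsub>GL7\<^esub> rep j"
    using GL7_rcos_rcos[OF G_L_GL7] rep_GL7[OF i] rep_GL7[OF j] gen_GL7(1)[OF a] hG G_L_GL7
    by (auto simp: coset_def)
  also have "\<dots> = coset j"
    using subgroup.rcos_const[OF subgroup_G_L group_GL7 hG] by (simp add: coset_def)
  finally show ?thesis by (simp add: j_def)
qed

definition word_perm :: "nat list \<Rightarrow> nat \<Rightarrow> nat" where
  "word_perm ws = fold gen_perm ws"

lemma word_perm_lt: "set ws \<subseteq> {..<6} \<Longrightarrow> j < 12 \<Longrightarrow> word_perm ws j < 12"
  by (induction ws arbitrary: j) (auto simp: word_perm_def gen_perm_lt)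

lemma coset_mult_word:
  "set ws \<subseteq> {..<6} \<Longrightarrow> j < 12 \<Longrightarrow> coset j #>\<^bsub>GL7\<^esub> word ws = coset (word_perm ws j)"
proof (induction ws arbitrary: j)
  case Nil
  then show ?case using group.coset_mult_one[OF group_GL7 coset_GL7] by (simp add: word_perm_def)
next
  case (Cons a ws)
  then have a: "a < 6" and ws: "set ws \<subseteq> {..<6}" by auto
  have "word ws \<in> carrier GL7"
    using word_in_generate[OF ws] group.generate_in_carrier[OF group_GL7 gen_set_GL7[OF order_refl]]
    by blast
  then have "coset j #>\<^bsub>GL7\<^esub> word (a # ws) = (coset j #>\<^bsub>GL7\<^esub> gen a) #>\<^bsub>GL7\<^esub> word ws"
    using GL7_rcos_rcos[OF coset_GL7[OF Cons.prems(2)] gen_GL7(1)[OF a]] by simp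
  also have "\<dots> = coset (word_perm ws (gen_perm a j))"
    using coset_mult_gen[OF Cons.prems(2) a] Cons.IH[OF ws gen_perm_lt[OF a Cons.prems(2)]] by simp
  finally show ?case by (simp add: word_perm_def)
qed

lemma M_L_cosets: "m \<in> M_L \<Longrightarrow> \<exists>i<12. m \<in> coset i"
  unfolding M_L_generators
proof (induction rule: generate_right_induct_gen)
  case one
  have "1\<^sub>m 7 \<in> coset 0" using subgroup.one_closed[OF subgroup_G_L] coset_zero by simp
  then show ?case by (intro exI[of _ 0]) simp
next
  case (step y a)
  then obtain i where i: "i < 12" "y \<in> coset i" by blast
  then have "y * gen a \<in> coset i #>\<^bsub>GL7\<^esub> gen a" by (auto simp: r_coset_def)
  then show ?case
    using coset_mult_gen[OF i(1)] gen_perm_lt[OF _ i(1)] step by (intro exI[of _ "gen_perm a i"]) auto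
qed auto

lemma cosets_L_eq: "cosets_L = coset ` {..<12}"
proof
  show "cosets_L \<subseteq> coset ` {..<12}"
  proof
    fix C assume "C \<in> cosets_L"
    then obtain m where m: "m \<in> M_L" "C = G_L #>\<^bsub>GL7\<^esub> m" by (auto simp: cosets_L_def)
    then obtain i where "i < 12" "m \<in> coset i" using M_L_cosets by blast
    then show "C \<in> coset ` {..<12}"
      using group.repr_independence[OF group_GL7 _ rep_GL7 subgroup_G_L] m by (auto simp: coset_def)
  qed
  show "coset ` {..<12} \<subseteq> cosets_L"
    unfolding cosets_L_def coset_def using rep_M_L by blast
qed

lemma coset_eq_iff: "i < 12 \<Longrightarrow> j < 12 \<Longrightarrow> coset i = coset j \<longleftrightarrow> i = j"
  using coset_inj by blast

lemma inj_on_coset: "inj_on coset {..<12}"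
  by (rule inj_onI, rule coset_inj) auto

lemma finite_cosets_L: "finite cosets_L"
  by (simp add: cosets_L_eq)

lemma card_cosets_L: "card cosets_L = 12"
proof -
  have "card (coset ` {..<12}) = card {..<12::nat}"
    by (rule card_image[OF inj_on_coset])
  then show ?thesis by (simp only: cosets_L_eq card_lessThan)
qed

section \<open>Faithfulness and the central element\<close>

text \<open>The first seven coset vectors are linearly independent: basis_adj is four times the inverse
  of the matrix they form.\<close>

definition basis_adj :: "int list list" where
  "basis_adj = [[-1,-1,-1,-1,-1,2,1],
    [-1,-1,-1,-1,1,0,1],
    [-1,-1,-1,1,-1,0,1],
    [-1,-1,-1,1,1,0,-1],
    [0,-2,-2,0,0,0,0],
    [-2,0,-2,0,0,0,0],
    [-2,-2,0,0,0,0,0]]"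

lemma basis_adj_lists: "lmat_mult basis_adj (map coset_vec [0..<7]) = map (map ((*) 4)) (lmat_one 7)"
  by code_simp

lemma coset_basis_invertible:
  "lmat 7 7 basis_adj * lmat 7 7 (map coset_vec [0..<7]) = (4 \<cdot>\<^sub>m 1\<^sub>m 7 :: complex mat)"
proof -
  have "lmat_dims 7 7 basis_adj" by (simp add: lmat_dims_def basis_adj_def)
  moreover have "lmat_dims 7 7 (map coset_vec [0..<7])"
    using coset_vec(1) by (auto simp: lmat_dims_def)
  ultimately have "lmat 7 7 basis_adj * lmat 7 7 (map coset_vec [0..<7]) =
      (lmat 7 7 (lmat_mult basis_adj (map coset_vec [0..<7])) :: complex mat)"
    by (simp add: lmat_mult)
  also have "\<dots> = lmat 7 7 (map (map ((*) 4)) (lmat_one 7))"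
    by (simp only: basis_adj_lists)
  also have "\<dots> = 4 \<cdot>\<^sub>m 1\<^sub>m 7"
    by (rule eq_matI) (auto simp: lmat_def lmat_one_def)
  finally show ?thesis .
qed

lemma coset_action_faithful:
  assumes x: "x \<in> carrier GL7" and y: "y \<in> carrier GL7"
    and eq: "\<And>i. i < 12 \<Longrightarrow> coset i #>\<^bsub>GL7\<^esub> x = coset i #>\<^bsub>GL7\<^esub> y"
  shows "x = y"
proof -
  have xc: "x \<in> carrier_mat 7 7" and yc: "y \<in> carrier_mat 7 7"
    using x y GL7_carrier_mat by auto
  have row: "lmat 1 7 [coset_vec i] * x = lmat 1 7 [coset_vec i] * y" if i: "i < 12" for i
  proof -
    have ri: "rep i \<in> carrier GL7" using rep_GL7[OF i] .
    have "G_L #>\<^bsub>GL7\<^esub> (rep i * x) = G_L #>\<^bsub>GL7\<^esub> (rep i * y)"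
      using eq[OF i] GL7_rcos_rcos[OF G_L_GL7 ri] x y by (simp add: coset_def)
    then have "fixed_row * (rep i * x) = fixed_row * (rep i * y)"
      using fixed_row_rcos group.subgroup_self[OF group_GL7] ri x y
      by (metis GL7_mult subgroup.m_closed)
    moreover have "fixed_row * (rep i * z) = lmat 1 7 [coset_vec i] * z" if "z \<in> carrier_mat 7 7" for z
      using assoc_mult_mat[of fixed_row 1 7 "rep i" 7 z 7] coset_vec(2)[OF i] GL7_carrier_mat[OF ri] that
      by simp
    ultimately show ?thesis using xc yc by simp
  qed
  let ?B = "lmat 7 7 (map coset_vec [0..<7]) :: complex mat"
  have "?B * x = ?B * y"
  proof (rule eq_matI)
    fix i j assume "i < dim_row (?B * y)" "j < dim_col (?B * y)"
    then have i: "i < 7" and j: "j < 7" using yc by (auto simp: lmat_def)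
    have "(?B * z) $$ (i, j) = (lmat 1 7 [coset_vec i] * z) $$ (0, j)" if "z \<in> carrier_mat 7 7" for z
      using lmat_mult_row[OF i that j, of "map coset_vec [0..<7]"] i by simp
    then show "(?B * x) $$ (i, j) = (?B * y) $$ (i, j)"
      using row[of i] i xc yc by simp
  qed (use xc yc in auto)
  then have "(lmat 7 7 basis_adj * ?B) * x = (lmat 7 7 basis_adj * ?B) * y"
    using xc yc by (simp add: assoc_mult_mat[of _ 7 7 _ 7 _ 7])
  then have "4 \<cdot>\<^sub>m x = 4 \<cdot>\<^sub>m y"
    using xc yc by (simp add: coset_basis_invertible mult_smult_assoc_mat[of _ 7 7 _ 7])
  show "x = y"
  proof (rule eq_matI)
    fix i j assume ij: "i < dim_row y" "j < dim_col y"
    then have "(4 \<cdot>\<^sub>m x) $$ (i, j) = (4 \<cdot>\<^sub>m y) $$ (i, j)" using \<open>4 \<cdot>\<^sub>m x = 4 \<cdot>\<^sub>m y\<close> by simp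
    then show "x $$ (i, j) = y $$ (i, j)" using ij xc yc by simp
  qed (use xc yc in auto)
qed

definition central_word :: "nat list" where
  "central_word = [0,1,3,4,5,1,0,4,3,5,1,4,5,1,0,4,3,5,1,4,5,1,4,5]"

lemma central_word_gens: "set central_word \<subseteq> {..<6}"
  by (simp add: central_word_def)

lemma central_word_lists:
  "list_all (\<lambda>a. lmat_mult (word_lists central_word) (gen_lists ! a) =
                 lmat_mult (gen_lists ! a) (word_lists central_word)) [0..<6]"
  by code_simp

lemma central_word_M_L: "word central_word \<in> M_L"
  unfolding M_L_generators by (rule word_in_generate[OF central_word_gens])

lemma central_word_commutes_gen: "a < 6 \<Longrightarrow> word central_word * gen a = gen a * word central_word"
  using central_word_lists word_lists[OF central_word_gens] gen_lists_dims
    lmat_mult[of 7 7 "word_lists central_word" 7 "gen_lists ! a", where 'a = complex]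
    lmat_mult[of 7 7 "gen_lists ! a" 7 "word_lists central_word", where 'a = complex]
  by (simp add: list_all_iff gen_def)

lemma central_word_central: "m \<in> M_L \<Longrightarrow> word central_word * m = m * word central_word"
proof -
  let ?W = "word central_word"
  assume "m \<in> M_L"
  then have "m \<in> carrier_mat 7 7 \<and> ?W * m = m * ?W"
    unfolding M_L_generators
  proof (induction rule: generate_right_induct_gen)
    case (step y a)
    then have y: "y \<in> carrier_mat 7 7" "?W * y = y * ?W" and a: "a < 6" by auto
    have "?W * (y * gen a) = (?W * y) * gen a"
      by (rule assoc_mult_mat[symmetric, OF word_carrier y(1) gen_carrier])
    also have "\<dots> = (y * ?W) * gen a"
      by (simp only: y(2))
    also have "\<dots> = y * (gen a * ?W)"
      using assoc_mult_mat[OF y(1) word_carrier gen_carrier] central_word_commutes_gen[OF a] by simp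
    also have "\<dots> = (y * gen a) * ?W"
      using assoc_mult_mat[OF y(1) gen_carrier word_carrier] by simp
    finally show ?case using y by (auto intro!: mult_carrier_mat[OF _ gen_carrier])
  qed (auto simp: right_mult_one_mat[OF word_carrier] left_mult_one_mat[OF word_carrier])
  then show ?thesis by simp
qed

text \<open>A central element w is determined by the coset G_L w = coset j: it maps coset i to
  coset j * rep i. Commuting with all generators then leaves only j = 0 (w = 1) and j = 11.\<close>

lemma coset_mult_central:
  assumes w: "w \<in> M_L" "\<And>m. m \<in> M_L \<Longrightarrow> w * m = m * w"
    and j: "j < 12" "G_L #>\<^bsub>GL7\<^esub> w = coset j" and i: "i < 12"
  shows "coset i #>\<^bsub>GL7\<^esub> w = coset (word_perm (transversal ! i) j)"
proof -
  have wG: "w \<in> carrier GL7" using w M_L_GL7 by blast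
  have "coset i #>\<^bsub>GL7\<^esub> w = G_L #>\<^bsub>GL7\<^esub> (w * rep i)"
    using GL7_rcos_rcos[OF G_L_GL7 rep_GL7[OF i] wG] w(2)[OF rep_M_L[OF i]] by (simp add: coset_def)
  also have "\<dots> = coset j #>\<^bsub>GL7\<^esub> rep i"
    using GL7_rcos_rcos[OF G_L_GL7 wG rep_GL7[OF i]] j(2) by simp
  also have "\<dots> = coset (word_perm (transversal ! i) j)"
    using coset_mult_word[OF transversal_gens[OF i] j(1)] by (simp add: rep_def)
  finally show ?thesis .
qed

definition commuting_perm :: "nat \<Rightarrow> bool" where
  "commuting_perm j \<longleftrightarrow> list_all (\<lambda>i. list_all (\<lambda>a.
      gen_perm a (word_perm (transversal ! i) j) = word_perm (transversal ! gen_perm a i) j) [0..<6]) [0..<12]"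

lemma coset_perm_lists:
  "list_all (\<lambda>j. commuting_perm j \<longrightarrow> j = 0 \<or> j = 11) [0..<12] \<and>
   list_all (\<lambda>i. word_perm (transversal ! i) 0 = i \<and> word_perm (transversal ! i) 11 = 11 - i) [0..<12] \<and>
   word_perm central_word 0 = 11"
  by code_simp

lemma word_perm_transversal:
  "i < 12 \<Longrightarrow> word_perm (transversal ! i) 0 = i \<and> word_perm (transversal ! i) 11 = 11 - i"
  using coset_perm_lists by (simp add: list_all_iff)

lemma G_L_rcos_central_word: "G_L #>\<^bsub>GL7\<^esub> word central_word = coset 11"
  using coset_mult_word[OF central_word_gens, of 0] coset_perm_lists coset_zero by simp

lemma coset_mult_central_word: "i < 12 \<Longrightarrow> coset i #>\<^bsub>GL7\<^esub> word central_word = coset (11 - i)"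
  using coset_mult_central[OF central_word_M_L central_word_central _ G_L_rcos_central_word]
    word_perm_transversal by simp

lemma central_coset_index:
  assumes w: "w \<in> M_L" "\<And>m. m \<in> M_L \<Longrightarrow> w * m = m * w"
    and j: "j < 12" "G_L #>\<^bsub>GL7\<^esub> w = coset j"
  shows "j = 0 \<or> j = 11"
proof -
  have wG: "w \<in> carrier GL7" using w M_L_GL7 by blast
  have act: "coset i #>\<^bsub>GL7\<^esub> w = coset (word_perm (transversal ! i) j)" if "i < 12" for i
    using coset_mult_central[of w j i] w j that by blast
  have perm_lt: "word_perm (transversal ! i) j < 12" if "i < 12" for i
    using word_perm_lt[OF transversal_gens[OF that] j(1)] .
  have "commuting_perm j"
    unfolding commuting_perm_def list_all_iff
  proof (intro ballI)
    fix i a assume "i \<in> set [0..<12]" "a \<in> set [0..<6]"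
    then have i: "i < 12" and a: "a < 6" by auto
    have "coset (gen_perm a (word_perm (transversal ! i) j)) = coset i #>\<^bsub>GL7\<^esub> (w * gen a)"
      using GL7_rcos_rcos[OF coset_GL7[OF i] wG gen_GL7(1)[OF a]] act[OF i]
        coset_mult_gen[OF perm_lt[OF i] a] by simp
    also have "\<dots> = coset i #>\<^bsub>GL7\<^esub> (gen a * w)"
      using w(2)[OF gen_M_L[OF a]] by simp
    also have "\<dots> = coset (word_perm (transversal ! gen_perm a i) j)"
      using GL7_rcos_rcos[OF coset_GL7[OF i] gen_GL7(1)[OF a] wG] act[OF gen_perm_lt[OF a i]]
        coset_mult_gen[OF i a] by simp
    finally show "gen_perm a (word_perm (transversal ! i) j) = word_perm (transversal ! gen_perm a i) j"
      using coset_inj perm_lt i a gen_perm_lt by blast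
  qed
  then show ?thesis using coset_perm_lists j(1) by (auto simp: list_all_iff)
qed

lemma central_eq_central_word:
  assumes w: "w \<in> M_L" "\<And>m. m \<in> M_L \<Longrightarrow> w * m = m * w" and nontrivial: "w \<noteq> 1\<^sub>m 7"
  shows "w = word central_word"
proof -
  have wG: "w \<in> carrier GL7" using w M_L_GL7 by blast
  have "G_L #>\<^bsub>GL7\<^esub> w \<in> cosets_L"
    unfolding cosets_L_def using w(1) by blast
  then obtain j where j: "j < 12" "G_L #>\<^bsub>GL7\<^esub> w = coset j"
    unfolding cosets_L_eq by blast
  have act: "coset i #>\<^bsub>GL7\<^esub> w = coset (word_perm (transversal ! i) j)" if "i < 12" for i
    using coset_mult_central[of w j i] w j that by blast
  from central_coset_index[OF w j] show ?thesis
  proof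
    assume "j = 0"
    have "w = 1\<^sub>m 7"
    proof (rule coset_action_faithful[OF wG])
      show "1\<^sub>m 7 \<in> carrier GL7" by (rule involution_GL7(1)) simp_all
      fix i :: nat assume i: "i < 12"
      have "coset i #>\<^bsub>GL7\<^esub> w = coset (word_perm (transversal ! i) 0)"
        using act[OF i] \<open>j = 0\<close> by simp
      also have "\<dots> = coset i"
        using word_perm_transversal[OF i] by simp
      finally show "coset i #>\<^bsub>GL7\<^esub> w = coset i #>\<^bsub>GL7\<^esub> 1\<^sub>m 7"
        using group.coset_mult_one[OF group_GL7 coset_GL7[OF i]] by simp
    qed
    with nontrivial show ?thesis by contradiction
  next
    assume "j = 11"
    show ?thesis
    proof (rule coset_action_faithful[OF wG subgroup.mem_carrier[OF subgroup_M_L central_word_M_L]])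
      fix i :: nat assume i: "i < 12"
      have "coset i #>\<^bsub>GL7\<^esub> w = coset (word_perm (transversal ! i) 11)"
        using act[OF i] \<open>j = 11\<close> by simp
      also have "\<dots> = coset (11 - i)"
        using word_perm_transversal[OF i] by simp
      finally show "coset i #>\<^bsub>GL7\<^esub> w = coset i #>\<^bsub>GL7\<^esub> word central_word"
        using coset_mult_central_word[OF i] by simp
    qed
  qed
qed

lemma w0_eq: "w0 = word central_word"
  unfolding w0_def
proof (rule the_equality)
  have "word central_word \<noteq> 1\<^sub>m 7"
  proof
    assume "word central_word = 1\<^sub>m 7"
    then have "coset 11 = coset 0"
      using G_L_rcos_central_word group.coset_mult_one[OF group_GL7 G_L_GL7] coset_zero by simp
    then show False using coset_inj[of 11 0] by simp
  qed
  then show "word central_word \<in> M_L \<and> word central_word \<noteq> \<one>\<^bsub>GL7\<^esub> \<and>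
      (\<forall>m\<in>M_L. word central_word \<otimes>\<^bsub>GL7\<^esub> m = m \<otimes>\<^bsub>GL7\<^esub> word central_word)"
    using central_word_M_L central_word_central by simp
next
  fix w assume "w \<in> M_L \<and> w \<noteq> \<one>\<^bsub>GL7\<^esub> \<and> (\<forall>m\<in>M_L. w \<otimes>\<^bsub>GL7\<^esub> m = m \<otimes>\<^bsub>GL7\<^esub> w)"
  then show "w = word central_word" by (intro central_eq_central_word) auto
qed

lemma cact_coset_w0: "i < 12 \<Longrightarrow> cact (coset i) w0 = coset (11 - i)"
  by (simp add: cact_def w0_eq coset_mult_central_word)

section \<open>The action on triples of cosets\<close>

lemma cosets_L_GL7: "C \<in> cosets_L \<Longrightarrow> C \<subseteq> carrier GL7"
  unfolding cosets_L_eq using coset_GL7 by auto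

lemma cact_cact:
  "C \<subseteq> carrier GL7 \<Longrightarrow> x \<in> carrier GL7 \<Longrightarrow> y \<in> carrier GL7 \<Longrightarrow> cact (cact C x) y = cact C (x * y)"
  by (simp add: cact_def GL7_rcos_rcos)

lemma cact_one: "C \<subseteq> carrier GL7 \<Longrightarrow> cact C (1\<^sub>m 7) = C"
  using group.coset_mult_one[OF group_GL7] by (simp add: cact_def)

lemma cact_cosets_L: "C \<in> cosets_L \<Longrightarrow> m \<in> M_L \<Longrightarrow> cact C m \<in> cosets_L"
proof -
  assume C: "C \<in> cosets_L" and m: "m \<in> M_L"
  then obtain n where n: "n \<in> M_L" "C = G_L #>\<^bsub>GL7\<^esub> n" by (auto simp: cosets_L_def)
  then have "cact C m = G_L #>\<^bsub>GL7\<^esub> (n * m)"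
    using GL7_rcos_rcos[OF G_L_GL7] m M_L_GL7 by (auto simp: cact_def)
  moreover have "n * m \<in> M_L" using subgroup.m_closed[OF subgroup_M_L n(1) m] by simp
  ultimately show ?thesis unfolding cosets_L_def by blast
qed

lemma inj_on_cact: "m \<in> carrier GL7 \<Longrightarrow> inj_on (\<lambda>C. cact C m) cosets_L"
proof (rule inj_onI)
  fix C D assume m: "m \<in> carrier GL7" and C: "C \<in> cosets_L" and D: "D \<in> cosets_L"
    and eq: "cact C m = cact D m"
  have m_inv: "inv\<^bsub>GL7\<^esub> m \<in> carrier GL7" "m * inv\<^bsub>GL7\<^esub> m = 1\<^sub>m 7"
    using group.inv_closed[OF group_GL7 m] group.r_inv[OF group_GL7 m] by simp_all
  have "C = cact (cact C m) (inv\<^bsub>GL7\<^esub> m)"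
    using cact_cact[OF cosets_L_GL7[OF C] m m_inv(1)] m_inv(2) cact_one[OF cosets_L_GL7[OF C]] by simp
  also have "\<dots> = D"
    using cact_cact[OF cosets_L_GL7[OF D] m m_inv(1)] m_inv(2) cact_one[OF cosets_L_GL7[OF D]] eq by simp
  finally show "C = D" .
qed

lemma sact_sact:
  "S \<subseteq> cosets_L \<Longrightarrow> x \<in> carrier GL7 \<Longrightarrow> y \<in> carrier GL7 \<Longrightarrow> sact (sact S x) y = sact S (x * y)"
  unfolding sact_def image_image using cact_cact cosets_L_GL7 by (auto intro!: image_cong)

lemma sact_one:
  assumes "S \<subseteq> cosets_L"
  shows "sact S (1\<^sub>m 7) = S"
proof -
  have "sact S (1\<^sub>m 7) = id ` S"
    unfolding sact_def by (rule image_cong) (use assms cact_one cosets_L_GL7 in auto)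
  then show ?thesis by simp
qed

lemma sact_triples_L:
  assumes S: "S \<in> triples_L" and m: "m \<in> M_L"
  shows "sact S m \<in> triples_L"
proof -
  have S': "S \<subseteq> cosets_L" "card S = 3" using S by (auto simp: triples_L_def)
  have "card (sact S m) = card S"
    unfolding sact_def
    by (rule card_image[OF inj_on_subset[OF inj_on_cact S'(1)]]) (use m M_L_GL7 in blast)
  moreover have "sact S m \<subseteq> cosets_L"
    unfolding sact_def using S'(1) cact_cosets_L m by blast
  ultimately show ?thesis using S'(2) by (simp add: triples_L_def)
qed

lemma sact_in_orbit_L: "m \<in> M_L \<Longrightarrow> sact S m \<in> orbit_L S"
  unfolding orbit_L_def by blast

lemma orbit_L_self: "S \<subseteq> cosets_L \<Longrightarrow> S \<in> orbit_L S"
  using sact_in_orbit_L[OF subgroup.one_closed[OF subgroup_M_L], of S] sact_one[of S] by simp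

lemma orbit_L_eq:
  assumes S: "S \<in> triples_L" and T: "T \<in> orbit_L S"
  shows "orbit_L T = orbit_L S"
proof -
  have S': "S \<subseteq> cosets_L" using S by (simp add: triples_L_def)
  obtain m where m: "m \<in> M_L" "T = sact S m" using T by (auto simp: orbit_L_def)
  have mG: "m \<in> carrier GL7" using m(1) M_L_GL7 by blast
  have T_orbit: "sact T n = sact S (m * n)" if "n \<in> M_L" for n
    using sact_sact[OF S' mG] that M_L_GL7 m(2) by blast
  show ?thesis
  proof
    show "orbit_L T \<subseteq> orbit_L S"
      using T_orbit subgroup.m_closed[OF subgroup_M_L m(1)] by (auto simp: orbit_L_def)
    show "orbit_L S \<subseteq> orbit_L T"
    proof
      fix U assume "U \<in> orbit_L S"
      then obtain n where n: "n \<in> M_L" "U = sact S n" by (auto simp: orbit_L_def)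
      let ?k = "inv\<^bsub>GL7\<^esub> m * n"
      have k: "?k \<in> M_L"
        using subgroup.m_closed[OF subgroup_M_L subgroup.m_inv_closed[OF subgroup_M_L m(1)] n(1)] by simp
      have nG: "n \<in> carrier GL7" using n(1) M_L_GL7 by blast
      have "m * ?k = (m * inv\<^bsub>GL7\<^esub> m) * n"
        using monoid.m_assoc[OF group.is_monoid[OF group_GL7] mG group.inv_closed[OF group_GL7 mG] nG]
        by simp
      also have "\<dots> = n"
        using group.r_inv[OF group_GL7 mG] monoid.l_one[OF group.is_monoid[OF group_GL7] nG] by simp
      finally have "m * ?k = n" .
      then have "U = sact T ?k" using T_orbit[OF k] n(2) by simp
      then show "U \<in> orbit_L T" using k by (auto simp: orbit_L_def)
    qed
  qed
qed

lemma swapped_pair_image: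
  assumes inj: "inj_on f A" and S: "S \<subseteq> A" and w: "w ` A \<subseteq> A"
    and comm: "\<And>x. x \<in> A \<Longrightarrow> w (f x) = f (w x)"
  shows "(\<exists>i \<in> f ` S. \<exists>j \<in> f ` S. i \<noteq> j \<and> w i = j \<and> w j = i) \<longleftrightarrow>
         (\<exists>i \<in> S. \<exists>j \<in> S. i \<noteq> j \<and> w i = j \<and> w j = i)"
proof -
  have eq: "f i = f j \<longleftrightarrow> i = j" if "i \<in> A" "j \<in> A" for i j
    using inj_on_eq_iff[OF inj that] .
  have swap: "w (f i) = f j \<longleftrightarrow> w i = j" if "i \<in> S" "j \<in> S" for i j
  proof -
    have "i \<in> A" "j \<in> A" "w i \<in> A" using S w that by auto
    then show ?thesis using comm eq by simp
  qed
  show ?thesis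
  proof
    assume "\<exists>i \<in> f ` S. \<exists>j \<in> f ` S. i \<noteq> j \<and> w i = j \<and> w j = i"
    then obtain i j where ij: "i \<in> S" "j \<in> S" "f i \<noteq> f j" "w (f i) = f j" "w (f j) = f i"
      by blast
    then have "i \<noteq> j" "w i = j" "w j = i"
      using swap[OF ij(1,2)] swap[OF ij(2,1)] by auto
    with ij(1,2) show "\<exists>i \<in> S. \<exists>j \<in> S. i \<noteq> j \<and> w i = j \<and> w j = i" by blast
  next
    assume "\<exists>i \<in> S. \<exists>j \<in> S. i \<noteq> j \<and> w i = j \<and> w j = i"
    then obtain i j where ij: "i \<in> S" "j \<in> S" "i \<noteq> j" "w i = j" "w j = i"
      by blast
    then have "f i \<noteq> f j" "w (f i) = f j" "w (f j) = f i"
      using eq[of i j] swap[OF ij(1,2)] swap[OF ij(2,1)] S by auto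
    with ij(1,2) show "\<exists>i \<in> f ` S. \<exists>j \<in> f ` S. i \<noteq> j \<and> w i = j \<and> w j = i" by blast
  qed
qed

lemma w0_M_L: "w0 \<in> M_L"
  by (simp add: w0_eq central_word_M_L)

lemma L_coherent_sact:
  assumes S: "S \<in> triples_L" and m: "m \<in> M_L"
  shows "L_coherent (sact S m) \<longleftrightarrow> L_coherent S"
proof -
  have mG: "m \<in> carrier GL7" and wG: "w0 \<in> carrier GL7"
    using m w0_M_L M_L_GL7 by auto
  have "cact (cact C m) w0 = cact (cact C w0) m" if "C \<in> cosets_L" for C
    using cact_cact[OF cosets_L_GL7[OF that] mG wG] cact_cact[OF cosets_L_GL7[OF that] wG mG]
      central_word_central[OF m] by (simp add: w0_eq)
  moreover have "(\<lambda>C. cact C w0) ` cosets_L \<subseteq> cosets_L"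
    using cact_cosets_L w0_M_L by blast
  moreover have "S \<subseteq> cosets_L" using S by (simp add: triples_L_def)
  ultimately show ?thesis
    unfolding L_coherent_def sact_def
    using swapped_pair_image[OF inj_on_cact[OF mG], of S "\<lambda>C. cact C w0"] by simp
qed

lemma orbit_L_subset:
  "S \<in> triples_L \<Longrightarrow> orbit_L S \<subseteq> {T \<in> triples_L. L_coherent T = L_coherent S}"
  using sact_triples_L L_coherent_sact by (auto simp: orbit_L_def)

lemma L_coherent_cosets:
  assumes "I \<subseteq> {..<12}"
  shows "L_coherent (coset ` I) \<longleftrightarrow> \<not> (\<exists>i \<in> I. \<exists>j \<in> I. i + j = 11)"
proof -
  have swap: "(coset i \<noteq> coset j \<and> cact (coset i) w0 = coset j \<and> cact (coset j) w0 = coset i) \<longleftrightarrow>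
      i + j = 11" if "i \<in> I" "j \<in> I" for i j
  proof -
    have "i < 12" "j < 12" using assms that by auto
    then show ?thesis by (simp add: cact_coset_w0 coset_eq_iff) presburger
  qed
  have "L_coherent (coset ` I) \<longleftrightarrow> \<not> (\<exists>i \<in> I. \<exists>j \<in> I.
      coset i \<noteq> coset j \<and> cact (coset i) w0 = coset j \<and> cact (coset j) w0 = coset i)"
    by (simp add: L_coherent_def)
  also have "\<dots> \<longleftrightarrow> \<not> (\<exists>i \<in> I. \<exists>j \<in> I. i + j = 11)"
    by (intro arg_cong[where f = Not] bex_cong refl) (use swap in blast)
  finally show ?thesis .
qed

section \<open>Counting the orbits\<close>

text \<open>A spanning tree of part of an orbit, grown from the root x: the entry (p, a) appends the image
  of the p-th element under the a-th move. Malformed entries are skipped.\<close>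

definition tree_step :: "('a \<Rightarrow> nat \<Rightarrow> 'a) \<Rightarrow> nat \<Rightarrow> nat \<times> nat \<Rightarrow> 'a list \<Rightarrow> 'a list" where
  "tree_step mv k pa ys =
     (case pa of (p, a) \<Rightarrow> if p < length ys \<and> a < k then ys @ [mv (ys ! p) a] else ys)"

definition tree_closure :: "('a \<Rightarrow> nat \<Rightarrow> 'a) \<Rightarrow> nat \<Rightarrow> 'a \<Rightarrow> (nat \<times> nat) list \<Rightarrow> 'a list" where
  "tree_closure mv k x tree = fold (tree_step mv k) tree [x]"

lemma tree_step_invariant:
  assumes ys: "\<forall>y \<in> set ys. P y" and step: "\<And>y a. P y \<Longrightarrow> a < k \<Longrightarrow> P (mv y a)"
  shows "\<forall>y \<in> set (tree_step mv k pa ys). P y"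
proof -
  obtain p a where pa: "pa = (p, a)" by fastforce
  show ?thesis
  proof (cases "p < length ys \<and> a < k")
    case True
    then have "P (mv (ys ! p) a)" using step ys nth_mem by blast
    then show ?thesis using True ys by (simp add: tree_step_def pa)
  next
    case False
    then show ?thesis using ys by (auto simp: tree_step_def pa)
  qed
qed

lemma tree_closure_invariant:
  assumes "P x" and step: "\<And>y a. P y \<Longrightarrow> a < k \<Longrightarrow> P (mv y a)"
  shows "\<forall>y \<in> set (tree_closure mv k x tree). P y"
proof -
  have "\<forall>y \<in> set (fold (tree_step mv k) tree ys). P y" if "\<forall>y \<in> set ys. P y" for ys
    using that
  proof (induction tree arbitrary: ys)
    case (Cons pa tree)
    from Cons.IH[OF tree_step_invariant[OF Cons.prems step]] show ?case by simp
  qed simp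
  from this[of "[x]"] show ?thesis using assms(1) by (simp add: tree_closure_def)
qed

definition triple_move :: "nat list \<Rightarrow> nat \<Rightarrow> nat list" where
  "triple_move t a = sort (map (gen_perm a) t)"

definition sorted_triple_list :: "nat list list \<Rightarrow> nat \<Rightarrow> bool" where
  "sorted_triple_list xss n \<longleftrightarrow>
     distinct xss \<and> list_all (\<lambda>xs. sorted xs \<and> distinct xs) xss \<and> length xss = n"

lemma card_sorted_triple_list:
  assumes "sorted_triple_list xss n"
  shows "card (set ` set xss) = n"
proof -
  have d: "distinct xss" and s: "\<forall>zs \<in> set xss. sorted zs \<and> distinct zs" and l: "length xss = n"
    using assms unfolding sorted_triple_list_def list_all_iff by blast+
  have "inj_on set (set xss)"
  proof (rule inj_onI)
    fix xs ys assume xs: "xs \<in> set xss" and ys: "ys \<in> set xss" and eq: "set xs = set ys"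
    from s xs ys have "sorted xs" "distinct xs" "sorted ys" "distinct ys" by blast+
    from sorted_distinct_set_unique[OF this eq] show "xs = ys" .
  qed
  then have "card (set ` set xss) = card (set xss)" by (rule card_image)
  then show ?thesis using distinct_card[OF d] l by simp
qed

definition coherent_tree :: "(nat \<times> nat) list" where
  "coherent_tree = [(0,5),(1,1),(1,4),(2,0),(2,2),(2,4),(3,3),(4,2),(4,4),(5,4),(6,3),(6,5),(8,1),(8,4),(9,3),(9,5),
    (10,3),(10,5),(11,5),(12,1),(13,4),(13,5),(14,3),(14,5),(15,5),(16,1),(17,5),(19,1),(19,4),
    (20,0),(21,3),(21,5),(22,4),(23,5),(24,1),(25,1),(25,4),(26,0),(26,2),(26,5),(27,4),(28,0),
    (28,4),(31,5),(32,1),(32,4),(33,3),(34,1),(34,4),(35,2),(36,0),(36,2),(36,4),(36,5),(38,2),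
    (38,5),(40,4),(42,4),(43,5),(44,1),(44,4),(45,0),(45,4),(46,3),(48,2),(48,4),(51,2),(51,4),
    (51,5),(52,4),(53,5),(54,4),(56,1),(56,4),(57,3),(58,5),(60,0),(60,4),(61,3),(62,4),(63,3),
    (65,4),(66,5),(67,4),(68,5),(69,1),(69,4),(70,5),(71,1),(71,4),(72,3),(72,5),(73,4),(74,3),
    (76,1),(77,4),(78,3),(80,3),(82,5),(83,1),(84,5),(85,1),(85,4),(86,4),(87,3),(87,5),(89,0),
    (89,4),(90,3),(91,5),(93,3),(93,5),(95,2),(95,5),(96,3),(100,0),(101,1),(102,0),(102,2),(102,4),
    (103,3),(104,3),(104,5),(105,5),(106,1),(107,4),(108,3),(111,5),(114,4),(118,2),(118,4),(119,4),
    (120,3),(120,5),(122,5),(123,1),(124,1),(126,3),(128,4),(129,3),(130,4),(131,3),(131,5),(132,3),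
    (133,5),(135,1),(135,4),(136,0),(141,3),(142,5),(143,1),(145,4),(146,0),(146,4),(150,1),(150,4),
    (153,4),(155,4),(158,5)]"

definition incoherent_tree :: "(nat \<times> nat) list" where
  "incoherent_tree = [(0,3),(0,4),(1,4),(2,3),(2,5),(3,3),(3,5),(4,5),(5,1),(6,5),(7,1),(8,1),(8,4),(9,0),(9,2),
    (10,1),(10,4),(11,0),(12,0),(12,2),(12,4),(14,2),(16,0),(16,4),(19,2),(19,4),(20,4),(21,5),
    (22,1),(23,4),(24,5),(25,1),(25,4),(26,5),(27,5),(28,1),(29,5),(30,5),(31,1),(32,4),(32,5),
    (33,5),(34,1),(36,0),(37,4),(39,0),(40,5),(41,4),(43,0),(43,5),(45,3),(47,1),(47,4),(48,3),
    (50,4),(52,4),(53,3),(55,3),(56,3)]"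

lemma orbit_trees:
  "sorted_triple_list (tree_closure triple_move 6 [0, 1, 2] coherent_tree) 160 \<and>
   sorted_triple_list (tree_closure triple_move 6 [0, 1, 11] incoherent_tree) 60"
  by code_simp

lemma sact_coset_image:
  assumes "I \<subseteq> {..<12}" "a < 6"
  shows "sact (coset ` I) (gen a) = coset ` gen_perm a ` I"
  unfolding sact_def cact_def image_image using assms coset_mult_gen by (auto intro!: image_cong)

lemma tree_closure_orbit:
  assumes t: "set t \<subseteq> {..<12}" and u: "u \<in> set (tree_closure triple_move 6 t tree)"
  shows "set u \<subseteq> {..<12} \<and> coset ` set u \<in> orbit_L (coset ` set t)"
proof -
  let ?T = "coset ` set t"
  have T: "?T \<subseteq> cosets_L" using t by (auto simp: cosets_L_eq)
  let ?P = "\<lambda>u. set u \<subseteq> {..<12} \<and> coset ` set u \<in> orbit_L ?T"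
  have step: "?P (triple_move u a)" if u: "?P u" and a: "a < 6" for u a
  proof -
    obtain m where m: "m \<in> M_L" "coset ` set u = sact ?T m"
      using u by (auto simp: orbit_L_def)
    have "coset ` set (triple_move u a) = sact (coset ` set u) (gen a)"
      using sact_coset_image[OF _ a, of "set u"] u by (simp add: triple_move_def)
    also have "\<dots> = sact ?T (m * gen a)"
      using sact_sact[OF T] m M_L_GL7 gen_GL7(1)[OF a] by auto
    finally have "coset ` set (triple_move u a) \<in> orbit_L ?T"
      using sact_in_orbit_L subgroup.m_closed[OF subgroup_M_L m(1) gen_M_L[OF a]] by simp
    moreover have "set (triple_move u a) \<subseteq> {..<12}"
      using u a gen_perm_lt by (auto simp: triple_move_def)
    ultimately show ?thesis by blast
  qed
  have "?P t"
    using t orbit_L_self[OF T] by (rule conjI)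
  from tree_closure_invariant[where P = ?P and mv = triple_move and k = 6, OF this step] u
  show ?thesis by blast
qed

lemma card_orbit_L_ge:
  assumes t: "set t \<subseteq> {..<12}" and n: "sorted_triple_list (tree_closure triple_move 6 t tree) n"
  shows "n \<le> card (orbit_L (coset ` set t))"
proof -
  let ?R = "set ` set (tree_closure triple_move 6 t tree)"
  have T: "coset ` set t \<subseteq> cosets_L" using t by (auto simp: cosets_L_eq)
  have "orbit_L (coset ` set t) \<subseteq> Pow cosets_L"
  proof
    fix U assume "U \<in> orbit_L (coset ` set t)"
    then obtain m where "m \<in> M_L" "U = sact (coset ` set t) m" by (auto simp: orbit_L_def)
    then show "U \<in> Pow cosets_L" using T cact_cosets_L by (auto simp: sact_def)
  qed
  then have fin: "finite (orbit_L (coset ` set t))"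
    by (rule finite_subset) (simp add: finite_cosets_L)
  have "?R \<subseteq> Pow {..<12}"
    using tree_closure_orbit[OF t] by blast
  then have inj: "inj_on ((`) coset) ?R"
    by (rule inj_on_subset[OF inj_on_image_Pow[OF inj_on_coset]])
  have "(`) coset ` ?R \<subseteq> orbit_L (coset ` set t)"
    using tree_closure_orbit[OF t] by blast
  from card_inj_on_le[OF inj this fin] show ?thesis
    using card_sorted_triple_list[OF n] by simp
qed

lemma subsets_of_partition_eq:
  assumes "finite X" "P \<union> Q = X" "P \<inter> Q = {}" "A \<subseteq> P" "B \<subseteq> Q"
    and "m \<le> card A" "n \<le> card B" "card X = m + n"
  shows "A = P \<and> B = Q \<and> card P = m \<and> card Q = n"
proof -
  have fin: "finite P" "finite Q" using assms(1,2) by auto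
  have "card P + card Q = card X" using card_Un_disjoint[OF fin assms(3)] assms(2) by simp
  moreover have "card A \<le> card P" "card B \<le> card Q" using card_mono fin assms(4,5) by auto
  ultimately have "card A = card P" "card B = card Q" "card P = m" "card Q = n"
    using assms(6-8) by linarith+
  then show ?thesis using card_subset_eq fin assms(4,5) by metis
qed

lemma card_triples_L: "card triples_L = 220"
proof -
  have "card triples_L = card cosets_L choose 3"
    unfolding triples_L_def by (rule n_subsets[OF finite_cosets_L])
  also have "\<dots> = 220"
    unfolding card_cosets_L by code_simp
  finally show ?thesis .
qed

lemma finite_triples_L: "finite triples_L"
proof (rule finite_subset)
  show "triples_L \<subseteq> Pow cosets_L" by (auto simp: triples_L_def)
qed (simp add: finite_cosets_L)

lemma coset_image_triples_L:
  assumes "I \<subseteq> {..<12}" "card I = 3"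
  shows "coset ` I \<in> triples_L"
proof -
  have "card (coset ` I) = 3"
    using card_image[OF inj_on_subset[OF inj_on_coset assms(1)]] assms(2) by simp
  moreover have "coset ` I \<subseteq> cosets_L"
    using assms(1) unfolding cosets_L_eq by (rule image_mono)
  ultimately show ?thesis by (simp add: triples_L_def)
qed

lemma orbits_L:
  "orbit_L (coset ` {0, 1, 2}) = {S \<in> triples_L. L_coherent S} \<and>
   orbit_L (coset ` {0, 1, 11}) = {S \<in> triples_L. \<not> L_coherent S} \<and>
   card {S \<in> triples_L. L_coherent S} = 160 \<and> card {S \<in> triples_L. \<not> L_coherent S} = 60"
proof (rule subsets_of_partition_eq[OF finite_triples_L])
  have T: "coset ` {0, 1, 2} \<in> triples_L" "coset ` {0, 1, 11} \<in> triples_L"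
    using coset_image_triples_L[of "{0, 1, 2}"] coset_image_triples_L[of "{0, 1, 11}"] by simp_all
  have "L_coherent (coset ` {0, 1, 2})" "\<not> L_coherent (coset ` {0, 1, 11})"
    using L_coherent_cosets[of "{0, 1, 2}"] L_coherent_cosets[of "{0, 1, 11}"] by simp_all
  then show "orbit_L (coset ` {0, 1, 2}) \<subseteq> {S \<in> triples_L. L_coherent S}"
    "orbit_L (coset ` {0, 1, 11}) \<subseteq> {S \<in> triples_L. \<not> L_coherent S}"
    using orbit_L_subset[OF T(1)] orbit_L_subset[OF T(2)] by auto
  show "160 \<le> card (orbit_L (coset ` {0, 1, 2}))" "60 \<le> card (orbit_L (coset ` {0, 1, 11}))"
    using card_orbit_L_ge[of "[0, 1, 2]" coherent_tree 160]
      card_orbit_L_ge[of "[0, 1, 11]" incoherent_tree 60] orbit_trees by simp_all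
  show "card triples_L = 160 + 60" using card_triples_L by simp
qed auto

lemma orbit_L_image:
  "orbit_L ` triples_L = {orbit_L (coset ` {0, 1, 2}), orbit_L (coset ` {0, 1, 11})}"
proof -
  let ?T0 = "coset ` {0, 1, 2}" and ?T1 = "coset ` {0, 1, 11}"
  have T: "?T0 \<in> triples_L" "?T1 \<in> triples_L"
    using coset_image_triples_L[of "{0, 1, 2}"] coset_image_triples_L[of "{0, 1, 11}"] by simp_all
  have "orbit_L S \<in> {orbit_L ?T0, orbit_L ?T1}" if S: "S \<in> triples_L" for S
  proof (cases "L_coherent S")
    case True
    then have "S \<in> orbit_L ?T0" unfolding orbits_L[THEN conjunct1] using S by blast
    then show ?thesis using orbit_L_eq[OF T(1)] by simp
  next
    case False
    then have "S \<in> orbit_L ?T1" unfolding orbits_L[THEN conjunct2, THEN conjunct1] using S by blast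
    then show ?thesis using orbit_L_eq[OF T(2)] by simp
  qed
  then show ?thesis
    using T by (intro equalityI image_subsetI) auto
qed

theorem proposition6p6:
  shows "card cosets_L = 12 \<and>
         card triples_L = 220 \<and>
         orbit_L ` triples_L =
           {{S \<in> triples_L. L_coherent S}, {S \<in> triples_L. \<not> L_coherent S}} \<and>
         card {S \<in> triples_L. L_coherent S} = 160 \<and>
         card {S \<in> triples_L. \<not> L_coherent S} = 60"
  unfolding orbit_L_image using card_cosets_L card_triples_L orbits_L by (simp only:)

end
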